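(* Let $S$ be a finite set, $f:S\to\mathbb{R}$ a fitness function to be maximized, $S_{\mathrm{opt}}$ the set of maximizers of $f$ and $S_{\mathrm{non}}=S\setminus S_{\mathrm{opt}}$ (assumed nonempty). Let $s1,s2$ be mutation operators on $S$ such that $s2$ is complementary to $s1$ on $f$, i.e. for every $x\in S_{\mathrm{non}}$ with $P_{s1}(x,x)=\rho(\mathbf{T}_{s1})$ it holds that $P_{s2}(x,x)<\rho(\mathbf{T}_{s1})$. Then there exists a strategy probability distribution $\mathbf{q}$ over $\{s1,s2\}$ such that the homogeneous mixed strategy (1+1) EA(s1,s2) with distribution $\mathbf{q}$ satisfies $R(\mathbf{T}_{\mathbf{q}})>R(\mathbf{T}_{s1})$ and $T(\mathbf{T}_{\mathbf{q}})<T(\mathbf{T}_{s1})$; i.e. its asymptotic convergence rate is larger and its asymptotic hitting time is shorter than those of the pure strategy EA(s1).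
   Context: A mutation operator $s$ on the finite set $S$ is a stochastic matrix $\mathbf{P}_{m,s}=[P_{m,s}(x,y)]_{x,y\in S}$ (probability that mutating $x$ yields $y$). Strict elitist selection between parent $x$ and offspring $y$ keeps $y$ if $f(y)>f(x)$ and keeps $x$ otherwise. The pure strategy (1+1) EA EA($s$) repeatedly mutates the current individual by $s$ and applies strict elitist selection; it is a homogeneous Markov chain on $S$ with transition probabilities $P_s(x,y)=P_{m,s}(x,y)$ if $f(y)>f(x)$, $P_s(x,y)=0$ if $y\neq x$ and $f(y)\le f(x)$, and $P_s(x,x)=1-\sum_{y:\,f(y)>f(x)}P_{m,s}(x,y)$. A (state-dependent) strategy probability distribution over operators $s1,\dots,s\kappa$ is a map $x\mapsto \mathbf{q}(x)=(q_{s1}(x),\dots,q_{s\kappa}(x))$ with $q_{sk}(x)\in[0,1]$ and $\sum_k q_{sk}(x)=1$. The homogeneous mixed strategy (1+1) EA with distribution $\mathbf{q}$ at each generation, with current individual $x$, chooses operator $sk$ with probability $q_{sk}(x)$, mutates $x$ by it, and applies strict elitist selection; its transition matrix is $P_{\mathbf{q}}(x,y)=\sum_{k}q_{sk}(x)P_{sk}(x,y)$. For such an EA with transition matrix $\mathbf{P}$, let $\mathbf{T}$ denote the submatrix $[P(x,y)]_{x,y\in S_{\mathrm{non}}}$ and $\rho(\mathbf{T})$ its spectral radius. The asymptotic convergence rate is $R(\mathbf{T})=-\ln\rho(\mathbf{T})$ (with $-\ln 0=+\infty$). The asymptotic hitting time is $T(\mathbf{T})=\rho((\mathbf{I}-\mathbf{T})^{-1})$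 if $\rho(\mathbf{T})<1$ and $T(\mathbf{T})=+\infty$ if $\rho(\mathbf{T})=1$. Subscripts $\mathbf{q}$ and $s$ indicate the matrices of the mixed strategy EA and of the pure strategy EA($s$), respectively. *)

theory Defs
  imports Complex_Main "HOL-Library.Extended_Real"
begin

text \<open>The search space S is the finite type 'a (S = UNIV). Matrices are functions
  'a \<Rightarrow> 'a \<Rightarrow> real.\<close>

definition S_opt :: "('a \<Rightarrow> real) \<Rightarrow> 'a set" where
  "S_opt f = {x. \<forall>y. f y \<le> f x}"

definition S_non :: "('a \<Rightarrow> real) \<Rightarrow> 'a set" where
  "S_non f = UNIV - S_opt f"

definition mutation_operator :: "('a::finite \<Rightarrow> 'a \<Rightarrow> real) \<Rightarrow> bool" where
  "mutation_operator Pm \<longleftrightarrow> (\<forall>x y. 0 \<le> Pm x y) \<and> (\<forall>x. (\<Sum>y\<in>UNIV. Pm x y) = 1)"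

text \<open>Transition matrix of the pure strategy (1+1) EA with strict elitist selection.\<close>
definition ea_trans :: "('a::finite \<Rightarrow> real) \<Rightarrow> ('a \<Rightarrow> 'a \<Rightarrow> real) \<Rightarrow> 'a \<Rightarrow> 'a \<Rightarrow> real" where
  "ea_trans f Pm x y =
     (if y = x then 1 - (\<Sum>z\<in>{z. f z > f x}. Pm x z)
      else if f y > f x then Pm x y else 0)"

definition mixed_trans ::
  "('a \<Rightarrow> real) \<Rightarrow> ('a \<Rightarrow> real) \<Rightarrow> ('a \<Rightarrow> 'a \<Rightarrow> real) \<Rightarrow> ('a \<Rightarrow> 'a \<Rightarrow> real) \<Rightarrow> 'a \<Rightarrow> 'a \<Rightarrow> real" where
  "mixed_trans q1 q2 P1 P2 x y = q1 x * P1 x y + q2 x * P2 x y"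

definition strategy_distribution :: "('a \<Rightarrow> real) \<Rightarrow> ('a \<Rightarrow> real) \<Rightarrow> bool" where
  "strategy_distribution q1 q2 \<longleftrightarrow>
     (\<forall>x. 0 \<le> q1 x \<and> q1 x \<le> 1 \<and> 0 \<le> q2 x \<and> q2 x \<le> 1 \<and> q1 x + q2 x = 1)"

definition sub_eigenvalue :: "'a set \<Rightarrow> ('a \<Rightarrow> 'a \<Rightarrow> real) \<Rightarrow> complex \<Rightarrow> bool" where
  "sub_eigenvalue A M c \<longleftrightarrow>
     (\<exists>v :: 'a \<Rightarrow> complex. (\<exists>x\<in>A. v x \<noteq> 0) \<and>
        (\<forall>x\<in>A. (\<Sum>y\<in>A. complex_of_real (M x y) * v y) = c * v x))"

definition spec_rad :: "'a set \<Rightarrow> ('a \<Rightarrow> 'a \<Rightarrow> real) \<Rightarrow> real" where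
  "spec_rad A M = Max (cmod ` {c. sub_eigenvalue A M c})"

definition sub_inv_I_minus :: "'a set \<Rightarrow> ('a \<Rightarrow> 'a \<Rightarrow> real) \<Rightarrow> 'a \<Rightarrow> 'a \<Rightarrow> real" where
  "sub_inv_I_minus A M = (SOME N. \<forall>x\<in>A. \<forall>y\<in>A.
      (\<Sum>z\<in>A. ((if x = z then 1 else 0) - M x z) * N z y) = (if x = y then 1 else 0))"

definition conv_rate :: "'a set \<Rightarrow> ('a \<Rightarrow> 'a \<Rightarrow> real) \<Rightarrow> ereal" where
  "conv_rate A M = (if spec_rad A M = 0 then \<infinity> else ereal (- ln (spec_rad A M)))"

definition hitting_time :: "'a set \<Rightarrow> ('a \<Rightarrow> 'a \<Rightarrow> real) \<Rightarrow> ereal" where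
  "hitting_time A M = (if spec_rad A M < 1 then ereal (spec_rad A (sub_inv_I_minus A M)) else \<infinity>)"

end

theory Submission
  imports Defs
begin

text \<open>Strict elitist selection only ever moves to strictly fitter points, so every transition
  matrix involved is triangular once the non-optimal points are ordered by fitness. Hence the
  spectral radius of T is its largest diagonal entry, i.e. the largest self-loop probability
  rho, the matrix (I - T)^-1 is again triangular with diagonal entries 1 / (1 - T x x), and its
  spectral radius is 1 / (1 - rho). Both the convergence rate and the hitting time are thus
  strictly decreasing functions of rho. The mixed strategy which uses s2 exactly at the points
  where the self-loop probability of s1 attains rho(T_s1), and s1 elsewhere, has all its
  self-loop probabilities strictly below rho(T_s1).\<close>

definition fitness_triangular :: "('a \<Rightarrow> real) \<Rightarrow> 'a set \<Rightarrow> ('a \<Rightarrow> 'a \<Rightarrow> real) \<Rightarrow> bool" where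
  "fitness_triangular f A M \<longleftrightarrow> (\<forall>x\<in>A. \<forall>y\<in>A. x \<noteq> y \<and> M x y \<noteq> 0 \<longrightarrow> f x < f y)"

lemma fitness_triangular_subset:
  "fitness_triangular f A M \<Longrightarrow> B \<subseteq> A \<Longrightarrow> fitness_triangular f B M"
  unfolding fitness_triangular_def by blast

lemma finite_ex_min_on:
  fixes f :: "'a \<Rightarrow> 'b::linorder"
  assumes "finite B" "B \<noteq> {}"
  shows "\<exists>x\<in>B. \<forall>y\<in>B. f x \<le> f y"
  using ex_min_if_finite[of "f ` B"] assms by (auto simp: not_less)

lemma finite_ex_max_on:
  fixes f :: "'a \<Rightarrow> 'b::linorder"
  assumes "finite B" "B \<noteq> {}"
  shows "\<exists>x\<in>B. \<forall>y\<in>B. f y \<le> f x"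
proof -
  have "Max (f ` B) \<in> f ` B" using assms by simp
  then obtain x where "x \<in> B" "f x = Max (f ` B)" by auto
  moreover have "\<forall>y\<in>B. f y \<le> Max (f ` B)" using assms by simp
  ultimately show ?thesis by metis
qed

lemma fitness_triangular_row_top:
  fixes M :: "'a \<Rightarrow> 'a \<Rightarrow> real" and w :: "'a \<Rightarrow> 'b::real_algebra_1"
  assumes "finite A" "fitness_triangular f A M" "x \<in> A"
    and "\<forall>z\<in>A. f x < f z \<longrightarrow> w z = 0"
  shows "(\<Sum>z\<in>A. of_real (M x z) * w z) = of_real (M x x) * w x"
proof -
  have "of_real (M x z) * w z = 0" if z: "z \<in> A - {x}" for z
  proof (cases "M x z = 0")
    case False
    then have "f x < f z" using assms(2,3) z unfolding fitness_triangular_def by auto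
    then show ?thesis using assms(4) z by simp
  qed simp
  then show ?thesis
    using sum.remove[OF assms(1,3), of "\<lambda>z. of_real (M x z) * w z"] by simp
qed

lemma fitness_triangular_solvable:
  fixes M :: "'a \<Rightarrow> 'a \<Rightarrow> real"
  assumes "finite A" "fitness_triangular f A M" "\<forall>x\<in>A. M x x \<noteq> c"
  shows "\<exists>w. \<forall>x\<in>A. (\<Sum>z\<in>A. M x z * w z) - c * w x = b x"
  using assms
proof (induction "card A" arbitrary: A rule: less_induct)
  case less
  show ?case
  proof (cases "A = {}")
    case False
    \<comment> \<open>Solve on all points but a least fit one m; column m of M vanishes off the diagonal, so the
      remaining equation, in row m, determines w m.\<close>
    obtain m where m: "m \<in> A" "\<forall>y\<in>A. f m \<le> f y"
      using finite_ex_min_on[OF less.prems(1) False] by blast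
    define A' where "A' = A - {m}"
    have smaller: "card A' < card A"
      unfolding A'_def using m(1) less.prems(1) by (metis card_Diff1_less)
    obtain w' where w': "\<forall>x\<in>A'. (\<Sum>z\<in>A'. M x z * w' z) - c * w' x = b x"
      using less.hyps[OF smaller] less.prems fitness_triangular_subset[of f A M A'] unfolding A'_def by auto
    define w where "w = w'(m := (b m - (\<Sum>z\<in>A'. M m z * w' z)) / (M m m - c))"
    have column_m: "M x m = 0" if "x \<in> A" "x \<noteq> m" for x
      using less.prems(2) m that unfolding fitness_triangular_def by force
    have split: "(\<Sum>z\<in>A. M x z * w z) = M x m * w m + (\<Sum>z\<in>A'. M x z * w' z)" for x
    proof -
      have "(\<Sum>z\<in>A. M x z * w z) = M x m * w m + (\<Sum>z\<in>A'. M x z * w z)"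
        unfolding A'_def by (rule sum.remove[OF less.prems(1) m(1)])
      also have "(\<Sum>z\<in>A'. M x z * w z) = (\<Sum>z\<in>A'. M x z * w' z)"
        unfolding w_def A'_def by (intro sum.cong) auto
      finally show ?thesis .
    qed
    have "(\<Sum>z\<in>A. M x z * w z) - c * w x = b x" if x: "x \<in> A" for x
    proof (cases "x = m")
      case True
      have "M m m - c \<noteq> 0" using less.prems(3) m by auto
      then have "(M m m - c) * w m = b m - (\<Sum>z\<in>A'. M m z * w' z)" unfolding w_def by simp
      then show ?thesis using split[of m] True by (simp add: algebra_simps)
    next
      case False
      then have "x \<in> A'" "w x = w' x" using x unfolding A'_def w_def by auto
      then show ?thesis using split[of x] column_m[OF x False] w' by simp
    qed
    then show ?thesis by blast
  qed simp
qed

lemma fitness_triangular_eigenvalue_diagonal: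
  assumes "finite A" "fitness_triangular f A M" "sub_eigenvalue A M c"
  shows "\<exists>x\<in>A. c = complex_of_real (M x x)"
proof -
  obtain v where v: "\<exists>x\<in>A. v x \<noteq> 0" "\<forall>x\<in>A. (\<Sum>y\<in>A. complex_of_real (M x y) * v y) = c * v x"
    using assms(3) unfolding sub_eigenvalue_def by blast
  define W where "W = {x\<in>A. v x \<noteq> 0}"
  have "finite W" "W \<noteq> {}" using assms(1) v(1) unfolding W_def by auto
  then obtain x where x: "x \<in> W" "\<forall>y\<in>W. f y \<le> f x" using finite_ex_max_on by blast
  then have "x \<in> A" "v x \<noteq> 0" unfolding W_def by auto
  moreover have "\<forall>z\<in>A. f x < f z \<longrightarrow> v z = 0" using x unfolding W_def by force
  ultimately have "(\<Sum>y\<in>A. complex_of_real (M x y) * v y) = complex_of_real (M x x) * v x"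
    by (intro fitness_triangular_row_top[OF assms(1,2)])
  then have "c * v x = complex_of_real (M x x) * v x" using v(2) \<open>x \<in> A\<close> by simp
  then show ?thesis using \<open>x \<in> A\<close> \<open>v x \<noteq> 0\<close> by auto
qed

lemma fitness_triangular_diagonal_eigenvalue_least:
  fixes M :: "'a \<Rightarrow> 'a \<Rightarrow> real"
  assumes fin: "finite A" and tri: "fitness_triangular f A M" and x1: "x1 \<in> A"
    and least: "\<forall>y\<in>A. f y < f x1 \<longrightarrow> M y y \<noteq> M x1 x1"
  shows "sub_eigenvalue A M (complex_of_real (M x1 x1))"
proof -
  \<comment> \<open>The eigenvector is 1 at x1, 0 at points at least as fit as x1 (other than x1), and solves a
    nonsingular triangular system on the less fit points.\<close>
  define d where "d = M x1 x1"
  define A' where "A' = {y\<in>A. f y < f x1}"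
  have A': "finite A'" "A' \<subseteq> A" "x1 \<notin> A'" using fin unfolding A'_def by auto
  obtain w where w: "\<forall>x\<in>A'. (\<Sum>z\<in>A'. M x z * w z) - d * w x = - M x x1"
    using fitness_triangular_solvable[OF A'(1) fitness_triangular_subset[OF tri A'(2)],
        of d "\<lambda>x. - M x x1"] least
    unfolding A'_def d_def by auto
  define v where "v y = (if y \<in> A' then w y else if y = x1 then 1 else 0)" for y
  have sum_v: "(\<Sum>z\<in>A. M y z * v z) = (\<Sum>z\<in>A'. M y z * w z) + M y x1" for y
  proof -
    have "(\<Sum>z\<in>A. M y z * v z) = (\<Sum>z\<in>insert x1 A'. M y z * v z)"
      using fin A'(2) x1 by (intro sum.mono_neutral_right) (auto simp: v_def)
    also have "\<dots> = (\<Sum>z\<in>A'. M y z * w z) + M y x1"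
      using A'(1,3) by (simp add: v_def)
    finally show ?thesis .
  qed
  have "(\<Sum>z\<in>A. M y z * v z) = d * v y" if y: "y \<in> A" for y
  proof (cases "y \<in> A'")
    case True
    then show ?thesis using w sum_v[of y] by (auto simp: v_def algebra_simps)
  next
    case False
    then have "f x1 \<le> f y" using y unfolding A'_def by auto
    then have zero: "M y z = 0" if "z \<in> insert x1 A'" "z \<noteq> y" for z
      using tri y x1 A'(2) that unfolding fitness_triangular_def A'_def by fastforce
    have "(\<Sum>z\<in>A'. M y z * w z) = 0"
      using zero False by (intro sum.neutral) auto
    moreover have "y \<noteq> x1 \<Longrightarrow> M y x1 = 0" using zero by simp
    ultimately
    show ?thesis using sum_v[of y] False A'(3) by (cases "y = x1") (auto simp: v_def d_def)
  qed
  then have "\<forall>x\<in>A. (\<Sum>y\<in>A. complex_of_real (M x y) * complex_of_real (v y))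
      = complex_of_real d * complex_of_real (v x)"
    by (simp flip: of_real_mult of_real_sum)
  moreover have "complex_of_real (v x1) \<noteq> 0" using A'(3) by (simp add: v_def)
  ultimately show ?thesis
    unfolding sub_eigenvalue_def d_def using x1 by (intro exI[where x="\<lambda>y. complex_of_real (v y)"]) blast
qed

lemma fitness_triangular_diagonal_eigenvalue:
  fixes M :: "'a \<Rightarrow> 'a \<Rightarrow> real"
  assumes fin: "finite A" and tri: "fitness_triangular f A M" and x0: "x0 \<in> A"
  shows "sub_eigenvalue A M (complex_of_real (M x0 x0))"
proof -
  define B where "B = {x\<in>A. M x x = M x0 x0}"
  have "finite B" "B \<noteq> {}" using fin x0 unfolding B_def by auto
  then obtain x1 where x1: "x1 \<in> B" "\<forall>y\<in>B. f x1 \<le> f y" using finite_ex_min_on by blast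
  have "sub_eigenvalue A M (complex_of_real (M x1 x1))"
    using x1 unfolding B_def by (intro fitness_triangular_diagonal_eigenvalue_least[OF fin tri]) force+
  then show ?thesis using x1 unfolding B_def by auto
qed

lemma spec_rad_fitness_triangular:
  fixes M :: "'a \<Rightarrow> 'a \<Rightarrow> real"
  assumes "finite A" "fitness_triangular f A M"
  shows "spec_rad A M = Max ((\<lambda>x. \<bar>M x x\<bar>) ` A)"
proof -
  have "{c. sub_eigenvalue A M c} = (\<lambda>x. complex_of_real (M x x)) ` A"
    using fitness_triangular_eigenvalue_diagonal[OF assms]
      fitness_triangular_diagonal_eigenvalue[OF assms] by blast
  then have "cmod ` {c. sub_eigenvalue A M c} = (\<lambda>x. \<bar>M x x\<bar>) ` A"
    by (simp add: image_image)
  then show ?thesis unfolding spec_rad_def by simp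
qed

lemma spec_rad_fitness_triangular_max_diag:
  fixes M :: "'a \<Rightarrow> 'a \<Rightarrow> real"
  assumes "finite A" "A \<noteq> {}" "fitness_triangular f A M" "\<forall>x\<in>A. 0 \<le> M x x"
  shows "\<forall>x\<in>A. M x x \<le> spec_rad A M" "\<exists>x\<in>A. M x x = spec_rad A M"
proof -
  have "spec_rad A M = Max ((\<lambda>x. M x x) ` A)"
    using spec_rad_fitness_triangular[OF assms(1,3)] assms(4) by (simp cong: image_cong)
  then show "\<forall>x\<in>A. M x x \<le> spec_rad A M" "\<exists>x\<in>A. M x x = spec_rad A M"
    using assms(1,2) Max_in[of "(\<lambda>x. M x x) ` A"] by (auto simp del: Max_in)
qed

lemma I_minus_mult_eq:
  fixes T :: "'a \<Rightarrow> 'a \<Rightarrow> real"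
  assumes "finite A" "x \<in> A"
  shows "(\<Sum>z\<in>A. ((if x = z then 1 else 0) - T x z) * w z) = w x - (\<Sum>z\<in>A. T x z * w z)"
  using assms
  by (simp add: left_diff_distrib sum_subtractf if_distrib[where f="\<lambda>c. c * _"] cong: if_cong)

lemma sub_inv_I_minus_eq:
  fixes T :: "'a \<Rightarrow> 'a \<Rightarrow> real"
  assumes fin: "finite A" and tri: "fitness_triangular f A T" and "\<forall>x\<in>A. T x x \<noteq> 1"
  shows "\<forall>x\<in>A. \<forall>y\<in>A. sub_inv_I_minus A T x y - (\<Sum>z\<in>A. T x z * sub_inv_I_minus A T z y)
           = (if x = y then 1 else 0)"
proof -
  have "\<forall>y. \<exists>w. \<forall>x\<in>A. (\<Sum>z\<in>A. T x z * w z) - 1 * w x = - (if x = y then 1 else 0)"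
    by (intro allI fitness_triangular_solvable[OF fin tri] assms(3))
  then have "\<exists>W. \<forall>y. \<forall>x\<in>A. (\<Sum>z\<in>A. T x z * W y z) - 1 * W y x = - (if x = y then 1 else 0)"
    by (rule choice)
  then obtain W where W: "\<forall>y. \<forall>x\<in>A. (\<Sum>z\<in>A. T x z * W y z) - W y x = - (if x = y then 1 else 0)"
    by auto
  have "\<forall>x\<in>A. \<forall>y\<in>A. (\<Sum>z\<in>A. ((if x = z then 1 else 0) - T x z) * W y z)
      = (if x = y then 1 else 0)"
  proof (intro ballI)
    fix x y assume "x \<in> A"
    then have "(\<Sum>z\<in>A. T x z * W y z) - W y x = - (if x = y then 1 else 0)" using W by blast
    then show "(\<Sum>z\<in>A. ((if x = z then 1 else 0) - T x z) * W y z) = (if x = y then 1 else 0)"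
      by (simp add: I_minus_mult_eq[OF fin \<open>x \<in> A\<close>] split: if_splits)
  qed
  then have right_inverse: "\<forall>x\<in>A. \<forall>y\<in>A.
      (\<Sum>z\<in>A. ((if x = z then 1 else 0) - T x z) * sub_inv_I_minus A T z y) = (if x = y then 1 else 0)"
    unfolding sub_inv_I_minus_def by (rule someI[where x="\<lambda>z y. W y z"])
  show ?thesis
  proof (intro ballI)
    fix x y assume x: "x \<in> A" and y: "y \<in> A"
    have "sub_inv_I_minus A T x y - (\<Sum>z\<in>A. T x z * sub_inv_I_minus A T z y)
        = (\<Sum>z\<in>A. ((if x = z then 1 else 0) - T x z) * sub_inv_I_minus A T z y)"
      by (rule I_minus_mult_eq[OF fin x, symmetric])
    also have "\<dots> = (if x = y then 1 else 0)" using right_inverse x y by blast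
    finally show "sub_inv_I_minus A T x y - (\<Sum>z\<in>A. T x z * sub_inv_I_minus A T z y)
        = (if x = y then 1 else 0)" .
  qed
qed

lemma fitness_triangular_I_minus_right_inverse:
  fixes T N :: "'a \<Rightarrow> 'a \<Rightarrow> real"
  assumes fin: "finite A" and tri: "fitness_triangular f A T" and diag: "\<forall>x\<in>A. T x x \<noteq> 1"
    and inv: "\<forall>x\<in>A. \<forall>y\<in>A. N x y - (\<Sum>z\<in>A. T x z * N z y) = (if x = y then 1 else 0)"
  shows "fitness_triangular f A N" "\<forall>x\<in>A. N x x = 1 / (1 - T x x)"
proof -
  have row_top: "(1 - T u u) * N u y = (if u = y then 1 else 0)"
    if "u \<in> A" "y \<in> A" "\<forall>z\<in>A. f u < f z \<longrightarrow> N z y = 0" for u y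
    using inv that fitness_triangular_row_top[OF fin tri, of u "\<lambda>z. N z y"]
    by (simp add: algebra_simps)
  show tri_N: "fitness_triangular f A N"
    unfolding fitness_triangular_def
  proof (intro ballI impI, rule ccontr)
    fix x y assume xy: "x \<in> A" "y \<in> A" "x \<noteq> y \<and> N x y \<noteq> 0" "\<not> f x < f y"
    define B where "B = {u\<in>A. N u y \<noteq> 0 \<and> u \<noteq> y \<and> f y \<le> f u}"
    have "finite B" "B \<noteq> {}" using fin xy unfolding B_def by auto
    then obtain u where u: "u \<in> B" "\<forall>z\<in>B. f z \<le> f u" using finite_ex_max_on by blast
    then have "\<forall>z\<in>A. f u < f z \<longrightarrow> N z y = 0" unfolding B_def by force
    then show False using row_top[of u y] u(1) xy(2) diag unfolding B_def by auto
  qed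
  show "\<forall>x\<in>A. N x x = 1 / (1 - T x x)"
  proof
    fix y assume y: "y \<in> A"
    have "\<forall>z\<in>A. f y < f z \<longrightarrow> N z y = 0"
      using tri_N y unfolding fitness_triangular_def by force
    then show "N y y = 1 / (1 - T y y)"
      using row_top[OF y y] diag y by (simp add: field_simps)
  qed
qed

lemma spec_rad_sub_inv_I_minus:
  fixes T :: "'a \<Rightarrow> 'a \<Rightarrow> real"
  assumes fin: "finite A" and ne: "A \<noteq> {}" and tri: "fitness_triangular f A T"
    and nonneg: "\<forall>x\<in>A. 0 \<le> T x x" and lt1: "spec_rad A T < 1"
  shows "spec_rad A (sub_inv_I_minus A T) = 1 / (1 - spec_rad A T)"
proof -
  note rad = spec_rad_fitness_triangular_max_diag[OF fin ne tri nonneg]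
  have below1: "T x x < 1" if "x \<in> A" for x
  proof -
    have "T x x \<le> spec_rad A T" using rad(1) that by blast
    then show ?thesis using lt1 by linarith
  qed
  then have "\<forall>x\<in>A. T x x \<noteq> 1" by force
  note N = fitness_triangular_I_minus_right_inverse[OF fin tri this sub_inv_I_minus_eq[OF fin tri this]]
  have "(\<lambda>x. \<bar>sub_inv_I_minus A T x x\<bar>) ` A = (\<lambda>x. 1 / (1 - T x x)) ` A"
  proof (rule image_cong)
    fix x assume "x \<in> A"
    then show "\<bar>sub_inv_I_minus A T x x\<bar> = 1 / (1 - T x x)"
      using N(2) below1[of x] by (simp add: abs_of_pos)
  qed simp
  then have "spec_rad A (sub_inv_I_minus A T) = Max ((\<lambda>x. 1 / (1 - T x x)) ` A)"
    using spec_rad_fitness_triangular[OF fin N(1)] by simp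
  also have "\<dots> = 1 / (1 - spec_rad A T)"
  proof (rule Max_eqI)
    show "finite ((\<lambda>x. 1 / (1 - T x x)) ` A)" using fin by simp
  next
    fix r assume "r \<in> (\<lambda>x. 1 / (1 - T x x)) ` A"
    then obtain x where "x \<in> A" "r = 1 / (1 - T x x)" by blast
    moreover have "T x x \<le> spec_rad A T" using rad(1) \<open>x \<in> A\<close> by blast
    ultimately show "r \<le> 1 / (1 - spec_rad A T)"
      using lt1 by (auto intro!: frac_le)
  next
    obtain x where x: "x \<in> A" "T x x = spec_rad A T" using rad(2) by blast
    then have "1 / (1 - spec_rad A T) = 1 / (1 - T x x)" by simp
    then show "1 / (1 - spec_rad A T) \<in> (\<lambda>x. 1 / (1 - T x x)) ` A"
      by (rule rev_image_eqI[OF x(1)])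
  qed
  finally show ?thesis .
qed

lemma conv_rate_less:
  assumes "0 \<le> spec_rad A M" "spec_rad A M < spec_rad A M'"
  shows "conv_rate A M' < conv_rate A M"
  using assms by (cases "spec_rad A M = 0") (auto simp: conv_rate_def)

lemma hitting_time_less:
  fixes M M' :: "'a \<Rightarrow> 'a \<Rightarrow> real"
  assumes fin: "finite A" and ne: "A \<noteq> {}"
    and tri: "fitness_triangular f A M" "fitness_triangular f A M'"
    and diag: "\<forall>x\<in>A. 0 \<le> M x x" "\<forall>x\<in>A. 0 \<le> M' x x \<and> M' x x \<le> 1"
    and less: "spec_rad A M < spec_rad A M'"
  shows "hitting_time A M < hitting_time A M'"
proof (cases "spec_rad A M' < 1")
  case True
  have "1 / (1 - spec_rad A M) < 1 / (1 - spec_rad A M')"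
    using True less by (simp add: frac_less2)
  moreover have "\<forall>x\<in>A. 0 \<le> M' x x" using diag(2) by blast
  ultimately show ?thesis
    using True less spec_rad_sub_inv_I_minus[OF fin ne tri(1) diag(1)]
      spec_rad_sub_inv_I_minus[OF fin ne tri(2)]
    by (simp add: hitting_time_def)
next
  case False
  have "spec_rad A M' \<le> 1"
    using spec_rad_fitness_triangular_max_diag(2)[OF fin ne tri(2)] diag(2) by fastforce
  then show ?thesis using False less by (simp add: hitting_time_def)
qed

lemma mixed_trans_fitness_triangular:
  "fitness_triangular f A P1 \<Longrightarrow> fitness_triangular f A P2
    \<Longrightarrow> fitness_triangular f A (mixed_trans q1 q2 P1 P2)"
  unfolding fitness_triangular_def mixed_trans_def by fastforce

lemma mixed_trans_diag_bounds:
  assumes "strategy_distribution q1 q2"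
    and "0 \<le> P1 x x \<and> P1 x x \<le> 1" "0 \<le> P2 x x \<and> P2 x x \<le> 1"
  shows "0 \<le> mixed_trans q1 q2 P1 P2 x x \<and> mixed_trans q1 q2 P1 P2 x x \<le> 1"
proof -
  have q: "0 \<le> q1 x" "0 \<le> q2 x" "q1 x + q2 x = 1"
    using assms(1) unfolding strategy_distribution_def by auto
  then have "q1 x * P1 x x \<le> q1 x" "q2 x * P2 x x \<le> q2 x"
    using assms(2,3) by (simp_all add: mult_left_le)
  then show ?thesis using q assms(2,3) unfolding mixed_trans_def by simp
qed

lemma complementary_mixture_spec_rad_less:
  fixes P1 P2 :: "'a \<Rightarrow> 'a \<Rightarrow> real"
  assumes fin: "finite A" and ne: "A \<noteq> {}"
    and tri: "fitness_triangular f A P1" "fitness_triangular f A P2"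
    and diag: "\<forall>x\<in>A. 0 \<le> P1 x x" "\<forall>x\<in>A. 0 \<le> P2 x x"
    and complementary: "\<forall>x\<in>A. P1 x x = spec_rad A P1 \<longrightarrow> P2 x x < spec_rad A P1"
  shows "\<exists>q1 q2. strategy_distribution q1 q2 \<and> spec_rad A (mixed_trans q1 q2 P1 P2) < spec_rad A P1"
proof -
  define q1 where "q1 x = (if P1 x x = spec_rad A P1 then 0 else 1 :: real)" for x
  define q2 where "q2 x = 1 - q1 x" for x
  define Pq where "Pq = mixed_trans q1 q2 P1 P2"
  have diag_q: "Pq x x = (if P1 x x = spec_rad A P1 then P2 x x else P1 x x)" for x
    unfolding Pq_def mixed_trans_def q1_def q2_def by simp
  have diag_less: "Pq x x < spec_rad A P1" if "x \<in> A" for x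
  proof (cases "P1 x x = spec_rad A P1")
    case False
    then show ?thesis
      using spec_rad_fitness_triangular_max_diag(1)[OF fin ne tri(1) diag(1)] that diag_q by fastforce
  qed (use complementary that diag_q in auto)
  have "fitness_triangular f A Pq"
    unfolding Pq_def by (rule mixed_trans_fitness_triangular[OF tri])
  moreover have "\<forall>x\<in>A. 0 \<le> Pq x x" using diag diag_q by simp
  ultimately obtain x where "x \<in> A" "Pq x x = spec_rad A Pq"
    using spec_rad_fitness_triangular_max_diag(2)[OF fin ne] by blast
  then have "spec_rad A Pq < spec_rad A P1" using diag_less by force
  moreover have "strategy_distribution q1 q2"
    unfolding strategy_distribution_def q1_def q2_def by auto
  ultimately show ?thesis unfolding Pq_def by blast
qed

lemma ea_trans_fitness_triangular: "fitness_triangular f A (ea_trans f Pm)"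
  unfolding fitness_triangular_def ea_trans_def by auto

lemma ea_trans_diag_bounds:
  assumes "mutation_operator Pm"
  shows "0 \<le> ea_trans f Pm x x \<and> ea_trans f Pm x x \<le> 1"
proof -
  have nonneg: "\<forall>x y. 0 \<le> Pm x y" and "(\<Sum>y\<in>UNIV. Pm x y) = 1"
    using assms unfolding mutation_operator_def by auto
  moreover have "(\<Sum>z\<in>{z. f z > f x}. Pm x z) \<le> (\<Sum>y\<in>UNIV. Pm x y)"
    using nonneg by (intro sum_mono2) auto
  moreover have "0 \<le> (\<Sum>z\<in>{z. f z > f x}. Pm x z)" using nonneg by (intro sum_nonneg) auto
  ultimately show ?thesis unfolding ea_trans_def by simp
qed

theorem theorem3:
  fixes f :: "'a::finite \<Rightarrow> real"
    and Pm1 Pm2 :: "'a \<Rightarrow> 'a \<Rightarrow> real"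
  assumes nonempty: "S_non f \<noteq> {}"
    and mut1: "mutation_operator Pm1"
    and mut2: "mutation_operator Pm2"
    and complementary: "\<forall>x\<in>S_non f.
          ea_trans f Pm1 x x = spec_rad (S_non f) (ea_trans f Pm1) \<longrightarrow>
          ea_trans f Pm2 x x < spec_rad (S_non f) (ea_trans f Pm1)"
  shows "\<exists>q1 q2. strategy_distribution q1 q2 \<and>
           conv_rate (S_non f) (mixed_trans q1 q2 (ea_trans f Pm1) (ea_trans f Pm2))
             > conv_rate (S_non f) (ea_trans f Pm1) \<and>
           hitting_time (S_non f) (mixed_trans q1 q2 (ea_trans f Pm1) (ea_trans f Pm2))
             < hitting_time (S_non f) (ea_trans f Pm1)"
proof -
  define A T1 T2 where "A = S_non f" and "T1 = ea_trans f Pm1" and "T2 = ea_trans f Pm2"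
  have fin: "finite A" and ne: "A \<noteq> {}" using nonempty unfolding A_def by auto
  have tri: "fitness_triangular f A T1" "fitness_triangular f A T2"
    unfolding T1_def T2_def by (rule ea_trans_fitness_triangular)+
  have diag: "0 \<le> T1 x x \<and> T1 x x \<le> 1" "0 \<le> T2 x x \<and> T2 x x \<le> 1" for x
    unfolding T1_def T2_def using ea_trans_diag_bounds mut1 mut2 by auto
  obtain q1 q2 where sd: "strategy_distribution q1 q2"
    and less: "spec_rad A (mixed_trans q1 q2 T1 T2) < spec_rad A T1"
    using complementary_mixture_spec_rad_less[OF fin ne tri] diag complementary
    unfolding A_def T1_def T2_def by blast
  define Tq where "Tq = mixed_trans q1 q2 T1 T2"
  have triq: "fitness_triangular f A Tq"
    unfolding Tq_def using tri by (rule mixed_trans_fitness_triangular)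
  have diag_q: "0 \<le> Tq x x \<and> Tq x x \<le> 1" for x
    unfolding Tq_def by (rule mixed_trans_diag_bounds[OF sd diag])
  obtain x where "Tq x x = spec_rad A Tq"
    using spec_rad_fitness_triangular_max_diag(2)[OF fin ne triq] diag_q by blast
  then have "0 \<le> spec_rad A Tq" using diag_q[of x] by simp
  then have "conv_rate A Tq > conv_rate A T1"
    using less unfolding Tq_def by (rule conv_rate_less)
  moreover have "hitting_time A Tq < hitting_time A T1"
    using diag diag_q less unfolding Tq_def
    by (intro hitting_time_less[OF fin ne triq[unfolded Tq_def] tri(1)]) auto
  ultimately show ?thesis using sd unfolding A_def T1_def T2_def Tq_def by blast
qed

end
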